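(* Let $K\subseteq\mathbb{C}$ be a field, $e\ge2$, and $f,g:\mathbb{Z}/e\mathbb{Z}\to\mathbb{C}$. Assume there exist $A=[a_{i,j}]$, $B=[b_{i,j}]\in M_e(K)$ (indices modulo $e$; write $A[i,j]=a_{i,j}$) such that for all $i,j$, \[ f(i)f(j)=\sum_{k=0}^{e-1}a_{j-i,k-i}f(k)\quad\text{and}\quad g(i)g(j)=\sum_{k=0}^{e-1}b_{j-i,k-i}g(k). \] Then for every $d\in(\mathbb{Z}/e\mathbb{Z})\setminus\{0\}$ and all $i,j$, \[ (f\overset{d}{\ast}g)(i)\,(f\overset{d}{\ast}g)(j)=\sum_{k=0}^{e-1}(A\overset{d}{\ast}B)[j-i,k-i]\,(f\overset{d}{\ast}g)(k). \] In particular, for every $n\ge1$ and all $i,j$, $f^{(n)}(i)f^{(n)}(j)=\sum_{k=0}^{e-1}A^{(n)}[j-i,k-i]\,f^{(n)}(k)$.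
   Context: For functions $f,g:\mathbb{Z}/e\mathbb{Z}\to\mathbb{C}$ and $d\in(\mathbb{Z}/e\mathbb{Z})\setminus\{0\}$, $(f\overset{d}{\ast}g)(i)=\sum_{s=0}^{e-1}f(s)g(ds+i)$; $f^{(n)}$ is the $n$-fold product $f\overset{-1}{\ast}\cdots\overset{-1}{\ast}f$, i.e. $f^{(n)}(i)=\sum_{k_1+\cdots+k_n\equiv i\ (\mathrm{mod}\ e)}f(k_1)\cdots f(k_n)$. For matrices $A=[a_{i,j}],B=[b_{i,j}]\in M_e(K)$, $A\overset{d}{\ast}B=\big[\sum_{s,t=0}^{e-1}a_{s,t}b_{ds+i,dt+j}\big]_{0\le i,j\le e-1}$, and $A^{(n)}=A\overset{-1}{\ast}\cdots\overset{-1}{\ast}A$ ($n$ factors; the $(-1)$-composition is associative). *)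

theory Defs
  imports Complex_Main
begin

text \<open>Z/eZ is modelled by integers taken modulo e; a function Z/eZ -> C is a function
  int => complex used only on representatives 0..e-1 (arguments are reduced mod e).
  An e x e matrix is a function int => int => complex, entries used on 0..e-1.\<close>

definition is_subfield :: "complex set \<Rightarrow> bool" where
  "is_subfield K \<longleftrightarrow> 0 \<in> K \<and> 1 \<in> K \<and>
     (\<forall>x\<in>K. \<forall>y\<in>K. x + y \<in> K \<and> x * y \<in> K) \<and>
     (\<forall>x\<in>K. - x \<in> K) \<and> (\<forall>x\<in>K. x \<noteq> 0 \<longrightarrow> inverse x \<in> K)"

definition dconv :: "int \<Rightarrow> int \<Rightarrow> (int \<Rightarrow> complex) \<Rightarrow> (int \<Rightarrow> complex) \<Rightarrow> int \<Rightarrow> complex" where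
  "dconv e d f g i = (\<Sum>s\<in>{0..<e}. f s * g ((d * s + i) mod e))"

definition mconv :: "int \<Rightarrow> int \<Rightarrow> (int \<Rightarrow> int \<Rightarrow> complex) \<Rightarrow> (int \<Rightarrow> int \<Rightarrow> complex)
    \<Rightarrow> int \<Rightarrow> int \<Rightarrow> complex" where
  "mconv e d A B i j = (\<Sum>s\<in>{0..<e}. \<Sum>t\<in>{0..<e}. A s t * B ((d * s + i) mod e) ((d * t + j) mod e))"

definition fpow :: "int \<Rightarrow> (int \<Rightarrow> complex) \<Rightarrow> nat \<Rightarrow> int \<Rightarrow> complex" where
  "fpow e f n = ((\<lambda>h. dconv e (-1) h f) ^^ (n - 1)) (\<lambda>i. f (i mod e))"

definition mpow :: "int \<Rightarrow> (int \<Rightarrow> int \<Rightarrow> complex) \<Rightarrow> nat \<Rightarrow> int \<Rightarrow> int \<Rightarrow> complex" where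
  "mpow e A n = ((\<lambda>H. mconv e (-1) H A) ^^ (n - 1)) (\<lambda>i j. A (i mod e) (j mod e))"

end

(* Extend f, g, A, B periodically. Reindexing k = i + c turns the hypothesis
   f(i) f(j) = sum_k A[j-i, k-i] f(k) into the translation-invariant rule
   f(x) f(x+a) = sum_c A[a,c] f(x+c), and back. For h = f *_d g, substituting t |-> s + t gives
   h(x) h(x+a) = sum_{s,t} f(s) f(s+t) g(ds+x) g(ds+x+dt+a). Expanding both products by the
   rules for f and g, shifting the g-index by dc and then s |-> s - c collapses the innermost
   sum to h(x+b), with coefficient sum_{t,c} A[t,c] B[dt+a, dc+b] = (A *_d B)[a,b].
   Since f^(n+1) = f^(n) *_{-1} f and A^(n+1) = A^(n) *_{-1} A, the statement for f^(n)
   follows by induction. *)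

theory Submission
  imports Defs
begin

definition periodic_mod :: "int \<Rightarrow> (int \<Rightarrow> 'a) \<Rightarrow> bool" where
  "periodic_mod e f \<longleftrightarrow> (\<forall>x. f (x mod e) = f x)"

lemma periodic_modD: "periodic_mod e f \<Longrightarrow> f (x mod e) = f x"
  by (simp add: periodic_mod_def)

lemma periodic_mod_affine:
  assumes "periodic_mod e g"
  shows "g (d * (x mod e) + y) = g (d * x + y)"
proof -
  have "(d * (x mod e) + y) mod e = (d * x + y) mod e"
    by (metis mod_add_left_eq mod_mult_right_eq)
  then show ?thesis
    by (metis assms periodic_modD)
qed

lemma periodic_mod_add:
  assumes "periodic_mod e g"
  shows "g (y + x mod e) = g (y + x)"
  using periodic_mod_affine[OF assms, of 1 x y] by (simp add: add.commute)

lemma sum_shift_periodic_mod: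
  fixes \<phi> :: "int \<Rightarrow> 'a::comm_monoid_add"
  assumes "e > 0" and "periodic_mod e \<phi>"
  shows "(\<Sum>x\<in>{0..<e}. \<phi> (x + c)) = (\<Sum>x\<in>{0..<e}. \<phi> x)"
proof -
  have "bij_betw (\<lambda>x. (x + c) mod e) {0..<e} {0..<e}"
    by (rule bij_betw_byWitness[of _ "\<lambda>x. (x - c) mod e"]) (use assms(1) in \<open>auto simp: mod_simps\<close>)
  then have "(\<Sum>x\<in>{0..<e}. \<phi> ((x + c) mod e)) = (\<Sum>x\<in>{0..<e}. \<phi> x)"
    by (rule sum.reindex_bij_betw)
  then show ?thesis
    using assms(2) by (simp add: periodic_mod_def)
qed

definition product_table :: "int \<Rightarrow> (int \<Rightarrow> int \<Rightarrow> complex) \<Rightarrow> (int \<Rightarrow> complex) \<Rightarrow> bool" where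
  "product_table e M h \<longleftrightarrow> (\<forall>i\<in>{0..<e}. \<forall>j\<in>{0..<e}.
     h i * h j = (\<Sum>k\<in>{0..<e}. M ((j - i) mod e) ((k - i) mod e) * h k))"

definition shift_product_rule :: "int \<Rightarrow> (int \<Rightarrow> int \<Rightarrow> complex) \<Rightarrow> (int \<Rightarrow> complex) \<Rightarrow> bool" where
  "shift_product_rule e M h \<longleftrightarrow> (\<forall>x a. h x * h (x + a) = (\<Sum>c\<in>{0..<e}. M a c * h (x + c)))"

lemma product_table_periodize:
  "product_table e (\<lambda>x y. M (x mod e) (y mod e)) (\<lambda>x. h (x mod e)) \<longleftrightarrow> product_table e M h"
  by (simp add: product_table_def)

lemma product_table_iff_shift_product_rule:
  assumes e: "e > 0" and h: "periodic_mod e h"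
    and M: "periodic_mod e M" "\<And>a. periodic_mod e (M a)"
  shows "product_table e M h \<longleftrightarrow> shift_product_rule e M h"
proof
  assume table: "product_table e M h"
  show "shift_product_rule e M h"
    unfolding shift_product_rule_def
  proof (intro allI)
    fix x a
    have "h x * h (x + a) = h (x mod e) * h ((x + a) mod e)"
      using h by (simp add: periodic_modD)
    also have "\<dots> = (\<Sum>k\<in>{0..<e}. M (((a + x) mod e - x mod e) mod e) ((k - x mod e) mod e) * h k)"
      using table e unfolding product_table_def by (simp add: add.commute)
    also have "\<dots> = (\<Sum>k\<in>{0..<e}. M a (k - x) * h k)"
    proof -
      have "((a + x) mod e - x mod e) mod e = a mod e"
        by (simp add: mod_diff_eq)
      then show ?thesis
        using M by (simp add: mod_diff_right_eq periodic_modD)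
    qed
    also have "\<dots> = (\<Sum>c\<in>{0..<e}. M a c * h (c + x))"
    proof -
      have "periodic_mod e (\<lambda>k. M a (k - x) * h k)"
        using h M unfolding periodic_mod_def by (metis mod_diff_left_eq)
      from sum_shift_periodic_mod[OF e this, of x] show ?thesis by simp
    qed
    finally show "h x * h (x + a) = (\<Sum>c\<in>{0..<e}. M a c * h (x + c))"
      by (simp add: add.commute)
  qed
next
  assume rule: "shift_product_rule e M h"
  show "product_table e M h"
    unfolding product_table_def
  proof (intro ballI)
    fix i j assume "i \<in> {0..<e}" "j \<in> {0..<e}"
    have "h i * h j = h i * h (i + (j - i))" by simp
    also have "\<dots> = (\<Sum>c\<in>{0..<e}. M (j - i) c * h (i + c))"
      using rule unfolding shift_product_rule_def by blast
    also have "\<dots> = (\<Sum>k\<in>{0..<e}. M (j - i) (k - i) * h k)"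
    proof -
      have "periodic_mod e (\<lambda>c. M (j - i) c * h (i + c))"
        using h M unfolding periodic_mod_def by (metis mod_add_right_eq)
      from sum_shift_periodic_mod[OF e this, of "- i"] show ?thesis by simp
    qed
    also have "\<dots> = (\<Sum>k\<in>{0..<e}. M ((j - i) mod e) ((k - i) mod e) * h k)"
      using M by (simp add: periodic_modD)
    finally show "h i * h j = (\<Sum>k\<in>{0..<e}. M ((j - i) mod e) ((k - i) mod e) * h k)" .
  qed
qed

lemma dconv_periodic_eq:
  assumes "periodic_mod e g"
  shows "dconv e d f g x = (\<Sum>s\<in>{0..<e}. f s * g (d * s + x))"
  using assms by (simp add: dconv_def periodic_modD)

lemma mconv_periodic_eq:
  assumes "periodic_mod e B" and "\<And>a. periodic_mod e (B a)"
  shows "mconv e d A B a b = (\<Sum>s\<in>{0..<e}. \<Sum>t\<in>{0..<e}. A s t * B (d * s + a) (d * t + b))"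
  using assms by (simp add: mconv_def periodic_modD)

lemma dconv_periodic: "periodic_mod e (dconv e d f g)"
  by (simp add: periodic_mod_def dconv_def mod_add_right_eq)

lemma mconv_periodic: "periodic_mod e (mconv e d A B)" "periodic_mod e (mconv e d A B a)"
  by (simp_all add: periodic_mod_def mconv_def fun_eq_iff mod_add_right_eq)

lemma dconv_periodize: "dconv e d (\<lambda>x. f (x mod e)) (\<lambda>x. g (x mod e)) = dconv e d f g"
  by (simp add: fun_eq_iff dconv_def)

lemma mconv_periodize:
  "mconv e d (\<lambda>x y. A (x mod e) (y mod e)) (\<lambda>x y. B (x mod e) (y mod e)) = mconv e d A B"
  by (simp add: fun_eq_iff mconv_def)

lemma dconv_mult_dconv:
  assumes e: "e > 0" and f: "periodic_mod e f" and g: "periodic_mod e g"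
  shows "dconv e d f g x * dconv e d f g (x + a) =
    (\<Sum>s\<in>{0..<e}. \<Sum>t\<in>{0..<e}. f s * f (s + t) * (g (d * s + x) * g ((d * s + x) + (d * t + a))))"
proof -
  have "dconv e d f g x * dconv e d f g (x + a) =
      (\<Sum>s\<in>{0..<e}. \<Sum>t\<in>{0..<e}. f s * f t * (g (d * s + x) * g (d * t + (x + a))))"
    by (simp add: dconv_periodic_eq[OF g] sum_product mult_ac)
  also have "\<dots> = (\<Sum>s\<in>{0..<e}. \<Sum>t\<in>{0..<e}.
      f s * f (s + t) * (g (d * s + x) * g ((d * s + x) + (d * t + a))))"
  proof (rule sum.cong[OF refl])
    fix s
    have "periodic_mod e (\<lambda>t. f s * f t * (g (d * s + x) * g (d * t + (x + a))))"
      unfolding periodic_mod_def using f g by (simp add: periodic_modD periodic_mod_affine)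
    from sum_shift_periodic_mod[OF e this, of s]
    show "(\<Sum>t\<in>{0..<e}. f s * f t * (g (d * s + x) * g (d * t + (x + a)))) =
      (\<Sum>t\<in>{0..<e}. f s * f (s + t) * (g (d * s + x) * g ((d * s + x) + (d * t + a))))"
      by (simp add: algebra_simps)
  qed
  finally show ?thesis .
qed

lemma dconv_shift_index:
  assumes e: "e > 0" and f: "periodic_mod e f" and g: "periodic_mod e g"
  shows "(\<Sum>s\<in>{0..<e}. f (s + c) * g (d * (s + c) + y)) = dconv e d f g y"
proof -
  have "periodic_mod e (\<lambda>s. f s * g (d * s + y))"
    unfolding periodic_mod_def using f g by (simp add: periodic_modD periodic_mod_affine)
  from sum_shift_periodic_mod[OF e this, of c] show ?thesis
    by (simp add: dconv_periodic_eq[OF g])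
qed

lemma shift_product_rule_dconv:
  assumes e: "e > 0"
    and f: "periodic_mod e f" and g: "periodic_mod e g"
    and B: "periodic_mod e B" "\<And>a. periodic_mod e (B a)"
    and rule_f: "shift_product_rule e A f" and rule_g: "shift_product_rule e B g"
  shows "shift_product_rule e (mconv e d A B) (dconv e d f g)"
  unfolding shift_product_rule_def
proof (intro allI)
  fix x a
  let ?E = "{0..<e}" and ?h = "dconv e d f g"
  have "?h x * ?h (x + a) = (\<Sum>s\<in>?E. \<Sum>t\<in>?E.
      (\<Sum>c\<in>?E. A t c * f (s + c)) * (\<Sum>b\<in>?E. B (d * t + a) b * g ((d * s + x) + b)))"
    using dconv_mult_dconv[OF e f g] rule_f rule_g unfolding shift_product_rule_def by presburger
  also have "\<dots> = (\<Sum>s\<in>?E. \<Sum>t\<in>?E. \<Sum>c\<in>?E.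
      A t c * f (s + c) * (\<Sum>b\<in>?E. B (d * t + a) b * g ((d * s + x) + b)))"
    by (simp add: sum_distrib_right)
  also have "\<dots> = (\<Sum>s\<in>?E. \<Sum>t\<in>?E. \<Sum>c\<in>?E.
      A t c * f (s + c) * (\<Sum>b\<in>?E. B (d * t + a) (d * c + b) * g (d * (s + c) + (x + b))))"
  proof (intro sum.cong refl)
    fix s t c
    have "periodic_mod e (\<lambda>b. B (d * t + a) b * g ((d * s + x) + b))"
      unfolding periodic_mod_def using g B by (simp add: periodic_modD periodic_mod_add)
    from sum_shift_periodic_mod[OF e this, of "d * c"]
    show "A t c * f (s + c) * (\<Sum>b\<in>?E. B (d * t + a) b * g ((d * s + x) + b)) =
      A t c * f (s + c) * (\<Sum>b\<in>?E. B (d * t + a) (d * c + b) * g (d * (s + c) + (x + b)))"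
      by (simp add: algebra_simps)
  qed
  also have "\<dots> = (\<Sum>s\<in>?E. \<Sum>t\<in>?E. \<Sum>c\<in>?E. \<Sum>b\<in>?E.
      A t c * B (d * t + a) (d * c + b) * (f (s + c) * g (d * (s + c) + (x + b))))"
    by (simp add: sum_distrib_left mult_ac)
  also have "\<dots> = (\<Sum>t\<in>?E. \<Sum>c\<in>?E. \<Sum>b\<in>?E. \<Sum>s\<in>?E.
      A t c * B (d * t + a) (d * c + b) * (f (s + c) * g (d * (s + c) + (x + b))))"
    by (subst sum.swap, rule sum.cong[OF refl], subst sum.swap, rule sum.cong[OF refl], rule sum.swap)
  also have "\<dots> = (\<Sum>t\<in>?E. \<Sum>c\<in>?E. \<Sum>b\<in>?E. A t c * B (d * t + a) (d * c + b) * ?h (x + b))"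
    by (simp add: dconv_shift_index[OF e f g] flip: sum_distrib_left)
  also have "\<dots> = (\<Sum>b\<in>?E. \<Sum>t\<in>?E. \<Sum>c\<in>?E. A t c * B (d * t + a) (d * c + b) * ?h (x + b))"
    by (rule trans[OF sum.cong[OF refl sum.swap] sum.swap])
  also have "\<dots> = (\<Sum>b\<in>?E. mconv e d A B a b * ?h (x + b))"
    by (simp add: mconv_periodic_eq[OF B] sum_distrib_right)
  finally show "?h x * ?h (x + a) = (\<Sum>b\<in>?E. mconv e d A B a b * ?h (x + b))" .
qed

lemma product_table_dconv:
  assumes e: "e > 0" and table_f: "product_table e A f" and table_g: "product_table e B g"
  shows "product_table e (mconv e d A B) (dconv e d f g)"
proof -
  define f' where "f' = (\<lambda>x. f (x mod e))"
  define g' where "g' = (\<lambda>x. g (x mod e))"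
  define A' where "A' = (\<lambda>x y. A (x mod e) (y mod e))"
  define B' where "B' = (\<lambda>x y. B (x mod e) (y mod e))"
  have periodic: "periodic_mod e f'" "periodic_mod e g'" "periodic_mod e A'" "periodic_mod e B'"
    "\<And>a. periodic_mod e (A' a)" "\<And>a. periodic_mod e (B' a)"
    by (simp_all add: periodic_mod_def fun_eq_iff f'_def g'_def A'_def B'_def)
  have "shift_product_rule e A' f'" "shift_product_rule e B' g'"
    using table_f table_g product_table_periodize[of e A f] product_table_periodize[of e B g]
      product_table_iff_shift_product_rule[OF e] periodic
    by (simp_all add: f'_def g'_def A'_def B'_def)
  then have "shift_product_rule e (mconv e d A' B') (dconv e d f' g')"
    using shift_product_rule_dconv[OF e] periodic by blast
  then have "product_table e (mconv e d A' B') (dconv e d f' g')"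
    using product_table_iff_shift_product_rule[OF e dconv_periodic mconv_periodic] by blast
  then show ?thesis
    by (simp add: f'_def g'_def A'_def B'_def dconv_periodize mconv_periodize)
qed

lemma fpow_Suc: "n \<ge> 1 \<Longrightarrow> fpow e f (Suc n) = dconv e (-1) (fpow e f n) f"
  unfolding fpow_def by (cases n) auto

lemma mpow_Suc: "n \<ge> 1 \<Longrightarrow> mpow e A (Suc n) = mconv e (-1) (mpow e A n) A"
  unfolding mpow_def by (cases n) auto

lemma product_table_fpow:
  assumes e: "e > 0" and table: "product_table e A f" and n: "n \<ge> 1"
  shows "product_table e (mpow e A n) (fpow e f n)"
  using n
proof (induction n rule: nat_induct_at_least)
  case base
  show ?case
    using table product_table_periodize[of e A f] by (simp add: fpow_def mpow_def)
next
  case (Suc n)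
  then show ?case
    using product_table_dconv[OF e _ table] by (simp add: fpow_Suc mpow_Suc)
qed

theorem proposition3p5:
  fixes K :: "complex set" and e :: int
    and f g :: "int \<Rightarrow> complex" and A B :: "int \<Rightarrow> int \<Rightarrow> complex"
  assumes K: "is_subfield K"
    and e: "e \<ge> 2"
    and AK: "\<forall>i\<in>{0..<e}. \<forall>j\<in>{0..<e}. A i j \<in> K"
    and BK: "\<forall>i\<in>{0..<e}. \<forall>j\<in>{0..<e}. B i j \<in> K"
    and hf: "\<forall>i\<in>{0..<e}. \<forall>j\<in>{0..<e}.
               f i * f j = (\<Sum>k\<in>{0..<e}. A ((j - i) mod e) ((k - i) mod e) * f k)"
    and hg: "\<forall>i\<in>{0..<e}. \<forall>j\<in>{0..<e}.
               g i * g j = (\<Sum>k\<in>{0..<e}. B ((j - i) mod e) ((k - i) mod e) * g k)"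
  shows "(\<forall>d\<in>{1..<e}. \<forall>i\<in>{0..<e}. \<forall>j\<in>{0..<e}.
            dconv e d f g i * dconv e d f g j =
            (\<Sum>k\<in>{0..<e}. mconv e d A B ((j - i) mod e) ((k - i) mod e) * dconv e d f g k))
       \<and> (\<forall>n::nat. n \<ge> 1 \<longrightarrow> (\<forall>i\<in>{0..<e}. \<forall>j\<in>{0..<e}.
            fpow e f n i * fpow e f n j =
            (\<Sum>k\<in>{0..<e}. mpow e A n ((j - i) mod e) ((k - i) mod e) * fpow e f n k)))"
proof -
  have e_pos: "e > 0"
    using e by simp
  have table_f: "product_table e A f" and table_g: "product_table e B g"
    using hf hg by (simp_all add: product_table_def)
  have "product_table e (mconv e d A B) (dconv e d f g)" for d
    using product_table_dconv[OF e_pos table_f table_g] .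
  moreover have "product_table e (mpow e A n) (fpow e f n)" if "n \<ge> 1" for n
    using product_table_fpow[OF e_pos table_f that] .
  ultimately show ?thesis
    unfolding product_table_def by blast
qed

end
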